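(* In an orbit-finite monoid, a sequence $x_1,\dots,x_n$ (with $n\ge 2$) is smooth if and only if for every $i<n$ the two-element sequence $x_i,x_{i+1}$ is smooth.
   Context: Atoms $\mathbb A$ are a countably infinite set acted on by its bijections (atom automorphisms). An orbit-finite monoid is a monoid whose underlying set is orbit-finite (every element finitely supported, and for some tuple $\bar a$ of atoms the set is a union of finitely many orbits of the group of automorphisms fixing $\bar a$ pointwise) and whose multiplication is finitely supported. A sequence $x_1,\dots,x_n$ of monoid elements is smooth if for every $i\in\{1,\dots,n\}$ there exist monoid elements $y,z$ with $y\,x_1\cdots x_n\,z=x_i$. *)

theory Defs
  imports Main
begin

text \<open>Atoms are modelled by the countably infinite type nat; atom automorphisms
are the bijections nat \<Rightarrow> nat.\<close>

definition atom_action :: "((nat \<Rightarrow> nat) \<Rightarrow> 'm \<Rightarrow> 'm) \<Rightarrow> bool" where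
  "atom_action act \<longleftrightarrow>
     (\<forall>x. act id x = x) \<and>
     (\<forall>\<pi> \<sigma> x. bij \<pi> \<longrightarrow> bij \<sigma> \<longrightarrow> act (\<pi> \<circ> \<sigma>) x = act \<pi> (act \<sigma> x))"

definition fixes_pointwise :: "(nat \<Rightarrow> nat) \<Rightarrow> nat set \<Rightarrow> bool" where
  "fixes_pointwise \<pi> S \<longleftrightarrow> bij \<pi> \<and> (\<forall>a\<in>S. \<pi> a = a)"

definition supports :: "((nat \<Rightarrow> nat) \<Rightarrow> 'm \<Rightarrow> 'm) \<Rightarrow> nat set \<Rightarrow> 'm \<Rightarrow> bool" where
  "supports act S x \<longleftrightarrow> (\<forall>\<pi>. fixes_pointwise \<pi> S \<longrightarrow> act \<pi> x = x)"

definition finitely_supported :: "((nat \<Rightarrow> nat) \<Rightarrow> 'm \<Rightarrow> 'm) \<Rightarrow> 'm \<Rightarrow> bool" where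
  "finitely_supported act x \<longleftrightarrow> (\<exists>S. finite S \<and> supports act S x)"

definition orbit_fix :: "((nat \<Rightarrow> nat) \<Rightarrow> 'm \<Rightarrow> 'm) \<Rightarrow> nat set \<Rightarrow> 'm \<Rightarrow> 'm set" where
  "orbit_fix act S x = {act \<pi> x | \<pi>. fixes_pointwise \<pi> S}"

definition orbit_finite :: "((nat \<Rightarrow> nat) \<Rightarrow> 'm \<Rightarrow> 'm) \<Rightarrow> 'm set \<Rightarrow> bool" where
  "orbit_finite act M \<longleftrightarrow>
     (\<forall>x\<in>M. finitely_supported act x) \<and>
     (\<exists>S F. finite S \<and> finite F \<and> M = (\<Union>x\<in>F. orbit_fix act S x))"

definition orbit_finite_monoid :: "((nat \<Rightarrow> nat) \<Rightarrow> 'm::monoid_mult \<Rightarrow> 'm) \<Rightarrow> bool" where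
  "orbit_finite_monoid act \<longleftrightarrow>
     atom_action act \<and> orbit_finite act (UNIV :: 'm set) \<and>
     (\<exists>S. finite S \<and>
        (\<forall>\<pi>. fixes_pointwise \<pi> S \<longrightarrow> (\<forall>x y. act \<pi> (x * y) = act \<pi> x * act \<pi> y)))"

definition smooth :: "'m::monoid_mult list \<Rightarrow> bool" where
  "smooth xs \<longleftrightarrow> (\<forall>i<length xs. \<exists>y z. y * prod_list xs * z = xs ! i)"

end

theory Submission
  imports Defs "HOL-Library.FuncSet"
begin

text \<open>Smoothness of a neighbouring pair \<open>x\<^sub>i, x\<^sub>i\<^sub>+\<^sub>1\<close> means that \<open>x\<^sub>i\<close> and \<open>x\<^sub>i\<^sub>+\<^sub>1\<close> both lie in the
two-sided ideal of \<open>x\<^sub>i x\<^sub>i\<^sub>+\<^sub>1\<close>. In an orbit-finite monoid every element has an idempotent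
power (the powers of \<open>w\<close> share a finite support, and only finitely many elements have a
given finite support), and this upgrades the two-sided relations to one-sided ones:
\<open>x\<^sub>i x\<^sub>i\<^sub>+\<^sub>1 r = x\<^sub>i\<close> and \<open>l x\<^sub>i x\<^sub>i\<^sub>+\<^sub>1 = x\<^sub>i\<^sub>+\<^sub>1\<close>. Chaining the first relation from position \<open>i\<close> to the
right and the second from position \<open>i\<close> to the left gives \<open>l x\<^sub>1\<cdots>x\<^sub>n r = x\<^sub>i\<close>.\<close>

subsection \<open>Supports and orbits\<close>

lemma act_eq_if_agree_on_support:
  assumes "atom_action act" and "supports act A x"
    and "bij \<sigma>" and "bij \<sigma>'" and "\<forall>a\<in>A. \<sigma> a = \<sigma>' a"
  shows "act \<sigma> x = act \<sigma>' x"
proof -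
  define \<rho> where "\<rho> = inv \<sigma>' \<circ> \<sigma>"
  have "bij \<rho>" unfolding \<rho>_def using assms(3,4) by (simp add: bij_comp bij_imp_bij_inv)
  moreover have "\<forall>a\<in>A. \<rho> a = a" unfolding \<rho>_def using assms(4,5) by (simp add: bij_is_inj)
  ultimately have "act \<rho> x = x" using assms(2) unfolding supports_def fixes_pointwise_def by blast
  moreover have "\<sigma> = \<sigma>' \<circ> \<rho>" unfolding \<rho>_def using assms(4)
    by (auto simp: fun_eq_iff bij_is_surj surj_f_inv_f)
  ultimately show ?thesis using assms(1) \<open>bij \<rho>\<close> assms(4) unfolding atom_action_def by metis
qed

lemma obtain_bij_fixing_with_image_in:
  fixes B K T :: "nat set"
  assumes "finite B" and "finite K" and "B \<inter> T = {}" and "K \<inter> T = {}"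
    and "card B \<le> card K"
  obtains \<tau> where "bij \<tau>" and "\<forall>a\<in>T. \<tau> a = a" and "\<tau> ` B \<subseteq> K"
proof -
  define C where "C = B \<union> K"
  have "finite C" unfolding C_def using assms(1,2) by simp
  obtain Q where Q: "Q \<subseteq> K" "card Q = card B" "finite Q"
    using obtain_subset_with_card_n[OF assms(5)] by blast
  obtain f where f: "bij_betw f B Q" using finite_same_card_bij[OF assms(1) Q(3)] Q(2) by metis
  have "card (C - B) = card (C - Q)"
    using Q assms(1,2) \<open>finite C\<close> by (simp add: C_def card_Diff_subset le_supI2)
  then obtain g where g: "bij_betw g (C - B) (C - Q)"
    using finite_same_card_bij \<open>finite C\<close> by blast
  define \<tau> where "\<tau> a = (if a \<in> B then f a else if a \<in> C then g a else a)" for a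
  have "bij_betw \<tau> B Q" using f by (rule bij_betw_cong[THEN iffD1, rotated]) (simp add: \<tau>_def)
  moreover have "bij_betw \<tau> (C - B) (C - Q)"
    using g by (rule bij_betw_cong[THEN iffD1, rotated]) (simp add: \<tau>_def)
  moreover have "bij_betw \<tau> (-C) (-C)"
    by (rule bij_betw_cong[THEN iffD1, rotated, of id]) (auto simp: \<tau>_def C_def)
  ultimately have "bij_betw \<tau> (B \<union> (C - B) \<union> -C) (Q \<union> (C - Q) \<union> -C)"
    using Q(1) by (intro bij_betw_combine) (auto simp: C_def)
  moreover have "B \<union> (C - B) \<union> -C = UNIV" and "Q \<union> (C - Q) \<union> -C = UNIV" by blast+
  ultimately have "bij \<tau>" by simp
  moreover have "\<forall>a\<in>T. \<tau> a = a" using assms(3,4) unfolding \<tau>_def C_def by auto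
  moreover have "\<tau> ` B \<subseteq> K" using \<open>bij_betw \<tau> B Q\<close> Q(1) by (auto simp: bij_betw_def)
  ultimately show ?thesis by (rule that)
qed

lemma orbit_element_by_bij_moving_support_into:
  assumes "atom_action act" and "finite A" and "finite K" and "K \<inter> T = {}" and "card A \<le> card K"
    and "m \<in> orbit_fix act S x" and "supports act T m"
  obtains \<sigma> where "bij \<sigma>" and "\<sigma> ` A \<subseteq> T \<union> K" and "act \<sigma> x = m"
proof -
  obtain \<pi> where m: "m = act \<pi> x" "bij \<pi>"
    using assms(6) unfolding orbit_fix_def fixes_pointwise_def by blast
  have "card (\<pi> ` A - T) \<le> card K"
    using assms(2,5) by (metis card_image_le card_mono Diff_subset finite_imageI order_trans)
  then obtain \<tau> where \<tau>: "bij \<tau>" "\<forall>a\<in>T. \<tau> a = a" "\<tau> ` (\<pi> ` A - T) \<subseteq> K"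
    using obtain_bij_fixing_with_image_in[of "\<pi> ` A - T" K T] assms(2-4) by blast
  have "act (\<tau> \<circ> \<pi>) x = act \<tau> m"
    using assms(1) \<tau>(1) m unfolding atom_action_def by blast
  also have "\<dots> = m" using assms(7) \<tau>(1,2) unfolding supports_def fixes_pointwise_def by blast
  finally have "act (\<tau> \<circ> \<pi>) x = m" .
  moreover have "bij (\<tau> \<circ> \<pi>)" using \<tau>(1) m(2) by (simp add: bij_comp)
  moreover have "(\<tau> \<circ> \<pi>) ` A \<subseteq> T \<union> K" using \<tau>(2,3) by fastforce
  ultimately show ?thesis using that by blast
qed

text \<open>Each such \<open>m\<close> is therefore determined by the restriction of \<open>\<sigma>\<close> to \<open>A\<close>, a function
from \<open>A\<close> into the finite set \<open>T \<union> K\<close>.\<close>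

lemma finite_supported_in_orbit:
  assumes "atom_action act" and "finite A" and "supports act A x" and "finite T"
  shows "finite {m \<in> orbit_fix act S x. supports act T m}"
proof -
  have "infinite (-T)" using assms(4) by (simp add: Compl_eq_Diff_UNIV Diff_infinite_finite)
  then obtain K where K: "finite K" "card K = card A" "K \<subseteq> -T"
    using infinite_arbitrarily_large by blast
  define G where "G f = act (SOME \<sigma>. bij \<sigma> \<and> (\<forall>a\<in>A. \<sigma> a = f a)) x" for f
  have "{m \<in> orbit_fix act S x. supports act T m} \<subseteq> G ` (\<Pi>\<^sub>E a\<in>A. T \<union> K)"
  proof
    fix m assume "m \<in> {m \<in> orbit_fix act S x. supports act T m}"
    then obtain \<pi> where "bij \<pi>" "\<pi> ` A \<subseteq> T \<union> K" "act \<pi> x = m"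
      using orbit_element_by_bij_moving_support_into[OF assms(1,2) K(1), of T m S x] K(2,3) by auto
    define f where "f = restrict \<pi> A"
    define \<sigma> where "\<sigma> = (SOME \<sigma>. bij \<sigma> \<and> (\<forall>a\<in>A. \<sigma> a = f a))"
    have "\<exists>\<sigma>. bij \<sigma> \<and> (\<forall>a\<in>A. \<sigma> a = f a)" using \<open>bij \<pi>\<close> unfolding f_def by auto
    then have \<sigma>: "bij \<sigma> \<and> (\<forall>a\<in>A. \<sigma> a = f a)" unfolding \<sigma>_def by (rule someI_ex)
    then have "\<forall>a\<in>A. \<sigma> a = \<pi> a" unfolding f_def by simp
    then have "act \<sigma> x = act \<pi> x"
      using \<sigma> \<open>bij \<pi>\<close> by (intro act_eq_if_agree_on_support[OF assms(1,3)]) auto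
    then have "G f = m" unfolding G_def \<sigma>_def[symmetric] using \<open>act \<pi> x = m\<close> by simp
    moreover have "f \<in> (\<Pi>\<^sub>E a\<in>A. T \<union> K)" using \<open>\<pi> ` A \<subseteq> T \<union> K\<close> unfolding f_def by auto
    ultimately show "m \<in> G ` (\<Pi>\<^sub>E a\<in>A. T \<union> K)" by blast
  qed
  moreover have "finite (\<Pi>\<^sub>E a\<in>A. T \<union> K)" using assms(2,4) K(1) by (simp add: finite_PiE)
  ultimately show ?thesis by (meson finite_imageI finite_subset)
qed

lemma orbit_finite_finite_supported:
  assumes "atom_action act" and "orbit_finite act M" and "finite T"
  shows "finite {m \<in> M. supports act T m}"
proof -
  obtain S F where "finite F" and M: "M = (\<Union>x\<in>F. orbit_fix act S x)"
    and fs: "\<forall>x\<in>M. finitely_supported act x"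
    using assms(2) unfolding orbit_finite_def by blast
  have "finite {m \<in> orbit_fix act S x. supports act T m}" if "x \<in> F" for x
  proof -
    have "x \<in> M" using that M assms(1)
      unfolding orbit_fix_def fixes_pointwise_def atom_action_def by (auto intro!: bexI[of _ x] exI[of _ id])
    then obtain A where "finite A" "supports act A x"
      using fs unfolding finitely_supported_def by blast
    then show ?thesis using finite_supported_in_orbit[OF assms(1) _ _ assms(3)] by blast
  qed
  moreover have "{m \<in> M. supports act T m} = (\<Union>x\<in>F. {m \<in> orbit_fix act S x. supports act T m})"
    using M by blast
  ultimately show ?thesis using \<open>finite F\<close> by simp
qed

lemma supports_power:
  fixes act :: "(nat \<Rightarrow> nat) \<Rightarrow> 'm::monoid_mult \<Rightarrow> 'm"
  assumes "supports act A w"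
    and "\<forall>\<pi>. fixes_pointwise \<pi> S \<longrightarrow> (\<forall>x y. act \<pi> (x * y) = act \<pi> x * act \<pi> y)"
  shows "supports act (A \<union> S) (w ^ Suc n)"
  unfolding supports_def
proof (intro allI impI)
  fix \<pi> assume "fixes_pointwise \<pi> (A \<union> S)"
  then have w: "act \<pi> w = w" and hom: "\<And>x y. act \<pi> (x * y) = act \<pi> x * act \<pi> y"
    using assms unfolding supports_def fixes_pointwise_def by auto
  show "act \<pi> (w ^ Suc n) = w ^ Suc n"
  proof (induction n)
    case (Suc n)
    have "act \<pi> (w ^ Suc (Suc n)) = act \<pi> w * act \<pi> (w ^ Suc n)"
      by (simp only: power_Suc[of w "Suc n"] hom)
    with Suc w show ?case by simp
  qed (simp add: w)
qed

subsection \<open>Idempotent powers\<close>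

lemma idempotent_power_if_finite_powers:
  fixes w :: "'m::monoid_mult"
  assumes "finite (range (\<lambda>n. w ^ Suc n))"
  shows "\<exists>n>0. w ^ n * w ^ n = w ^ n"
proof -
  have "\<not> inj (\<lambda>n. w ^ Suc n)" using assms finite_imageD infinite_UNIV_nat by blast
  then obtain i j where "i < j" and "w ^ Suc i = w ^ Suc j"
    unfolding inj_def by (metis linorder_neqE_nat)
  define p k where "p = Suc i" and "k = j - i"
  have "k > 0" and "w ^ (p + k) = w ^ p"
    using \<open>i < j\<close> \<open>w ^ Suc i = w ^ Suc j\<close> by (simp_all add: p_def k_def)
  have shift: "w ^ (q + k) = w ^ q" if "p \<le> q" for q
  proof -
    have "q + k = (p + k) + (q - p)" using that by simp
    then have "w ^ (q + k) = w ^ (p + k) * w ^ (q - p)" by (simp only: power_add)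
    also have "\<dots> = w ^ q" using that \<open>w ^ (p + k) = w ^ p\<close> by (simp flip: power_add)
    finally show ?thesis .
  qed
  have period: "w ^ (q + t * k) = w ^ q" if "p \<le> q" for q t
  proof (induction t)
    case (Suc t)
    have "w ^ (q + Suc t * k) = w ^ (q + t * k + k)" by (simp add: algebra_simps)
    also have "\<dots> = w ^ (q + t * k)" using that by (intro shift) simp
    finally show ?case using Suc by simp
  qed simp
  \<comment> \<open>\<open>p * k\<close> lies beyond the threshold \<open>p\<close> and is a multiple of the period \<open>k\<close>.\<close>
  have "w ^ (p * k) * w ^ (p * k) = w ^ (p * k)"
    using period[of "p * k" p] \<open>k > 0\<close> by (simp add: power_add mult.commute)
  then show ?thesis using \<open>k > 0\<close> p_def by (intro exI[of _ "p * k"]) simp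
qed

lemma orbit_finite_monoid_idempotent_power:
  fixes act :: "(nat \<Rightarrow> nat) \<Rightarrow> 'm::monoid_mult \<Rightarrow> 'm" and w :: 'm
  assumes "orbit_finite_monoid act"
  shows "\<exists>n>0. w ^ n * w ^ n = w ^ n"
proof -
  have "atom_action act" and "orbit_finite act (UNIV :: 'm set)"
    using assms unfolding orbit_finite_monoid_def by blast+
  obtain A where "finite A" and "supports act A w"
    using \<open>orbit_finite act UNIV\<close> unfolding orbit_finite_def finitely_supported_def by blast
  obtain S where "finite S"
    and "\<forall>\<pi>. fixes_pointwise \<pi> S \<longrightarrow> (\<forall>x y. act \<pi> (x * y) = act \<pi> x * act \<pi> y)"
    using assms unfolding orbit_finite_monoid_def by blast
  then have "range (\<lambda>n. w ^ Suc n) \<subseteq> {m \<in> UNIV. supports act (A \<union> S) m}"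
    using supports_power \<open>supports act A w\<close> by blast
  moreover have "finite {m \<in> UNIV. supports act (A \<union> S) m}"
    using orbit_finite_finite_supported \<open>atom_action act\<close> \<open>orbit_finite act UNIV\<close>
      \<open>finite A\<close> \<open>finite S\<close> by blast
  ultimately have "finite (range (\<lambda>n. w ^ Suc n))" by (rule finite_subset)
  then show ?thesis by (rule idempotent_power_if_finite_powers)
qed

lemma power_sandwich:
  fixes u x w :: "'m::monoid_mult"
  assumes "u * x * w = x"
  shows "u ^ n * x * w ^ n = x"
proof (induction n)
  case (Suc n)
  have "u ^ Suc n * x * w ^ Suc n = u ^ n * (u * x * w) * w ^ n"
    by (simp only: power_Suc2[of u] power_Suc[of w] mult.assoc)
  with Suc assms show ?case by simp
qed simp

lemma right_absorb_if_idempotent_powers: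
  fixes u x y v :: "'m::monoid_mult"
  assumes idem: "\<And>w::'m. \<exists>n>0. w ^ n * w ^ n = w ^ n"
    and "u * (x * y) * v = x"
  shows "\<exists>r. x * y * r = x"
proof -
  obtain m where idem_w: "(y * v) ^ Suc m * (y * v) ^ Suc m = (y * v) ^ Suc m"
    using idem by (metis gr0_implies_Suc)
  have "u * x * (y * v) = x" using assms(2) by (simp add: mult.assoc)
  then have x: "u ^ Suc m * x * (y * v) ^ Suc m = x" by (rule power_sandwich)
  have "x * (y * v) ^ Suc m = u ^ Suc m * x * ((y * v) ^ Suc m * (y * v) ^ Suc m)"
    by (subst (1) x[symmetric]) (simp add: mult.assoc)
  also have "\<dots> = x" using idem_w x by simp
  finally have "x * y * (v * (y * v) ^ m) = x" by (simp add: mult.assoc)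
  then show ?thesis by blast
qed

lemma left_absorb_if_idempotent_powers:
  fixes u x y v :: "'m::monoid_mult"
  assumes idem: "\<And>w::'m. \<exists>n>0. w ^ n * w ^ n = w ^ n"
    and "u * (x * y) * v = y"
  shows "\<exists>l. l * x * y = y"
proof -
  obtain m where idem_w: "(u * x) ^ Suc m * (u * x) ^ Suc m = (u * x) ^ Suc m"
    using idem by (metis gr0_implies_Suc)
  have "(u * x) * y * v = y" using assms(2) by (simp add: mult.assoc)
  then have y: "(u * x) ^ Suc m * y * v ^ Suc m = y" by (rule power_sandwich)
  have "(u * x) ^ Suc m * y = ((u * x) ^ Suc m * (u * x) ^ Suc m) * y * v ^ Suc m"
    by (subst (1) y[symmetric]) (simp add: mult.assoc)
  also have "\<dots> = y" using idem_w y by simp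
  finally have "(u * x) ^ Suc m * y = y" .
  then have "((u * x) ^ m * u) * x * y = y" by (simp only: power_Suc2 mult.assoc)
  then show ?thesis by blast
qed

subsection \<open>Smooth sequences\<close>

lemma smooth_pair_iff:
  "smooth [a, b] \<longleftrightarrow> (\<exists>y z. y * (a * b) * z = a) \<and> (\<exists>y z. y * (a * b) * z = b)"
  unfolding smooth_def by (auto simp: less_Suc_eq)

lemma smooth_infix:
  assumes "smooth (ys @ zs @ ws)"
  shows "smooth zs"
  unfolding smooth_def
proof (intro allI impI)
  fix j assume "j < length zs"
  then obtain y z where "y * prod_list (ys @ zs @ ws) * z = zs ! j"
    using assms unfolding smooth_def by (metis length_append nat_add_left_cancel_less nth_append_length_plus
        nth_append trans_less_add1)
  then have "(y * prod_list ys) * prod_list zs * (prod_list ws * z) = zs ! j"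
    by (simp add: mult.assoc)
  then show "\<exists>y z. y * prod_list zs * z = zs ! j" by blast
qed

lemma smooth_adjacent_pair:
  assumes "smooth xs" and "Suc i < length xs"
  shows "smooth [xs ! i, xs ! Suc i]"
proof -
  have "xs = take i xs @ [xs ! i, xs ! Suc i] @ drop (Suc (Suc i)) xs"
    using assms(2) by (simp add: Cons_nth_drop_Suc)
  then show ?thesis using assms(1) smooth_infix by metis
qed

lemma prod_list_right_absorbs_hd:
  fixes x :: "'m::monoid_mult"
  assumes "successively (\<lambda>a b. \<exists>r. a * b * r = a) (x # xs)"
  shows "\<exists>r. prod_list (x # xs) * r = x"
  using assms
proof (induction xs arbitrary: x)
  case (Cons y xs)
  then have "successively (\<lambda>a b. \<exists>r. a * b * r = a) (y # xs)" and "\<exists>r. x * y * r = x" by simp_all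
  then obtain R r where "prod_list (y # xs) * R = y" and "x * y * r = x" using Cons.IH by blast
  then have "prod_list (x # y # xs) * (R * r) = x" by (metis mult.assoc prod_list.Cons)
  then show ?case by blast
qed (auto intro: exI[of _ 1])

lemma prod_list_left_absorbs_last:
  fixes x :: "'m::monoid_mult"
  assumes "successively (\<lambda>a b. \<exists>l. l * a * b = b) (xs @ [x])"
  shows "\<exists>l. l * prod_list (xs @ [x]) = x"
  using assms
proof (induction xs arbitrary: x rule: rev_induct)
  case (snoc y xs)
  then have "successively (\<lambda>a b. \<exists>l. l * a * b = b) (xs @ [y])" and "\<exists>l. l * y * x = x"
    unfolding successively_append_iff[of _ "xs @ [y]" "[x]"] by simp_all
  then obtain L l where L: "L * prod_list (xs @ [y]) = y" and "l * y * x = x" using snoc.IH by blast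
  have "(l * L) * prod_list ((xs @ [y]) @ [x]) = l * (L * prod_list (xs @ [y])) * x"
    by (simp add: mult.assoc)
  also have "\<dots> = x" using L \<open>l * y * x = x\<close> by simp
  finally show ?case by blast
qed (auto intro: exI[of _ 1])

lemma smooth_if_successively_absorbing:
  fixes xs :: "'m::monoid_mult list"
  assumes right: "successively (\<lambda>a b. \<exists>r. a * b * r = a) xs"
    and left: "successively (\<lambda>a b. \<exists>l. l * a * b = b) xs"
  shows "smooth xs"
  unfolding smooth_def
proof (intro allI impI)
  fix i assume "i < length xs"
  define x where "x = xs ! i"
  obtain ys zs where xs: "xs = ys @ x # zs"
    using id_take_nth_drop[OF \<open>i < length xs\<close>] unfolding x_def by blast
  then have "xs = (ys @ [x]) @ zs" by simp
  obtain r where r: "prod_list (x # zs) * r = x"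
    using right prod_list_right_absorbs_hd unfolding xs successively_append_iff by blast
  obtain l where l: "l * prod_list (ys @ [x]) = x"
    using left prod_list_left_absorbs_last
    unfolding \<open>xs = (ys @ [x]) @ zs\<close> successively_append_iff by blast
  have "l * prod_list xs * r = l * prod_list ys * (prod_list (x # zs) * r)"
    unfolding xs by (simp add: mult.assoc)
  also have "\<dots> = l * prod_list (ys @ [x])" using r by (simp add: mult.assoc)
  also have "\<dots> = x" using l .
  finally show "\<exists>y z. y * prod_list xs * z = x" by blast
qed

theorem mainTheorem11:
  fixes act :: "(nat \<Rightarrow> nat) \<Rightarrow> 'm::monoid_mult \<Rightarrow> 'm"
    and xs :: "'m list"
  assumes "orbit_finite_monoid act"
    and "length xs \<ge> 2"
  shows "smooth xs \<longleftrightarrow> (\<forall>i. i + 1 < length xs \<longrightarrow> smooth [xs ! i, xs ! (i + 1)])"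
proof
  assume "smooth xs"
  then show "\<forall>i. i + 1 < length xs \<longrightarrow> smooth [xs ! i, xs ! (i + 1)]"
    by (simp add: smooth_adjacent_pair)
next
  assume pairs: "\<forall>i. i + 1 < length xs \<longrightarrow> smooth [xs ! i, xs ! (i + 1)]"
  have idem: "\<And>w::'m. \<exists>n>0. w ^ n * w ^ n = w ^ n"
    using orbit_finite_monoid_idempotent_power[OF assms(1)] .
  have "successively (\<lambda>a b. \<exists>r. a * b * r = a) xs"
    and "successively (\<lambda>a b. \<exists>l. l * a * b = b) xs"
    using pairs right_absorb_if_idempotent_powers[OF idem] left_absorb_if_idempotent_powers[OF idem]
    unfolding successively_conv_nth smooth_pair_iff by (metis Suc_eq_plus1)+
  then show "smooth xs" by (rule smooth_if_successively_absorbing)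
qed

end
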